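(* Let $m\ge 1$, $n\ge 2$, let $E=(d_{kl})\in\mathbb{R}^{m\times m}$ and let $F:\mathbb{R}^m\to\mathbb{R}^m$ be sufficiently smooth. Let $\phi$ be a periodic solution, with minimum period $P>0$, of the kinetic system $\dot U=F(U)$, such that the Floquet multipliers $\gamma_1,\dots,\gamma_m$ of the linearized system $\dot U=J(t)U$, $J(t)=F_U(\phi(t))$, satisfy $\gamma_1=1$ and $|\gamma_i|<1$ for $i=2,\dots,m$. Suppose that $\phi(\cdot,\epsilon)$, $\epsilon\in(-\epsilon_0,\epsilon_0)$, is a smooth family of periodic solutions of the perturbed system $(I_m+\epsilon E)\dot U=F(U)$ with $\phi(\cdot,0)=\phi$, and let $P(\epsilon)$ be the minimum period of $\phi(\cdot,\epsilon)$. Let $\mathcal{E}\in\mathbb{R}^{mn\times mn}$ be the block matrix whose diagonal $m\times m$ blocks are $(n-1)E$ and whose off-diagonal blocks are $-E$, let $\widehat J(t)=\mathrm{diag}(J(t),\dots,J(t))\in\mathbb{R}^{mn\times mn}$, and let $\Psi(t,\delta)$ be the principal fundamental matrix solution of $\dot Y=(-\delta\mathcal{E}+\widehat J(t))Y$, $Y\in\mathbb{R}^{mn}$. For $j=1,\dots,n$ let $\xi_j\in\mathbb{R}^{mn}$ be the vector whose $j$-th block (of size $m$) is $\phi_1(0):=\frac{d\phi}{dt}(0)$ and whose other blocks are $0$, and let $\eta_j\in\mathbb{R}^{mn}$ be the vector whose $j$-th block is $\frac{\partial}{\partial\epsilon}\phi(0,0)$ and whose other blocks are $0$. Define $$\tilde\xi_1:=\xi_1+\cdots+\xi_n,\qquad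 \tilde\xi_j(\delta):=\tfrac1n(\xi_{j-1}-\xi_n)+\delta(\eta_{j-1}-\eta_n),\quad j=2,\dots,n,\ \delta\ge 0.$$ Then $\Psi(P,\delta)\tilde\xi_1=\tilde\xi_1$ for all $\delta\ge0$, and for sufficiently small $\delta\ge 0$, $$\Psi(P,\delta)\tilde\xi_j(\delta)=(1-\delta nP'(0))\tilde\xi_j(\delta)+O(\delta^2),\qquad j=2,\dots,n.$$
   Context: The matrix $\widehat J(t)$ is block diagonal with $n$ copies of $J(t)$; $\dot Y=(-\delta\mathcal{E}+\widehat J(t))Y$ is the linearization of the $n$-patch model $\dot{\mathcal U}=-\delta\mathcal E\mathcal U+(F(U^1),\dots,F(U^n))^T$ about the synchronous periodic solution $(\phi^T,\dots,\phi^T)^T$. $P'(0)$ denotes the derivative of the period function $P(\epsilon)$ at $\epsilon=0$. *)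

theory Defs
  imports "HOL-Analysis.Analysis" "HOL-Computational_Algebra.Polynomial"
begin

definition C2_on :: "'a::euclidean_space set \<Rightarrow> ('a \<Rightarrow> 'b::real_normed_vector) \<Rightarrow> bool" where
  "C2_on S f \<longleftrightarrow> open S \<and>
     (\<exists>(f' :: 'a \<Rightarrow> ('a \<Rightarrow>\<^sub>L 'b)) (f'' :: 'a \<Rightarrow> ('a \<Rightarrow>\<^sub>L ('a \<Rightarrow>\<^sub>L 'b))).
        (\<forall>x\<in>S. (f has_derivative blinfun_apply (f' x)) (at x)) \<and>
        (\<forall>x\<in>S. (f' has_derivative blinfun_apply (f'' x)) (at x)) \<and>
        continuous_on S f'')"

definition min_period :: "(real \<Rightarrow> 'a) \<Rightarrow> real \<Rightarrow> bool" where
  "min_period u P \<longleftrightarrow> P > 0 \<and> (\<forall>t. u (t + P) = u t) \<and>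
     (\<forall>q. 0 < q \<and> q < P \<longrightarrow> (\<exists>t. u (t + q) \<noteq> u t))"

definition charpoly :: "real^'m^'m \<Rightarrow> real poly" where
  "charpoly M = det (\<chi> i j. (if i = j then [:0, 1:] else 0) - [:M $ i $ j:])"

text \<open>The Floquet multipliers (eigenvalues of the monodromy matrix M, counted with
  algebraic multiplicity) are 1 (simple) and others of modulus < 1.\<close>
definition floquet_hyperbolic :: "real^'m^'m \<Rightarrow> bool" where
  "floquet_hyperbolic M \<longleftrightarrow>
     (let p = map_poly complex_of_real (charpoly M) in
        order 1 p = 1 \<and> (\<forall>z. poly p z = 0 \<longrightarrow> z = 1 \<or> cmod z < 1))"

definition principal_fundamental :: "(real \<Rightarrow> real^'k^'k) \<Rightarrow> (real \<Rightarrow> real^'k^'k) \<Rightarrow> bool" where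
  "principal_fundamental A X \<longleftrightarrow> X 0 = mat 1 \<and>
     (\<forall>t. (X has_vector_derivative (A t ** X t)) (at t))"

text \<open>Coupling matrix on R^(mn), indexed by (patch, component).\<close>
definition coupling :: "real^'m^'m \<Rightarrow> real^('n::finite \<times> 'm)^('n \<times> 'm)" where
  "coupling E = (\<chi> i j. if fst i = fst j then (real CARD('n) - 1) * E $ snd i $ snd j else - E $ snd i $ snd j)"

definition blockdiag :: "real^'m^'m \<Rightarrow> real^('n::finite \<times> 'm)^('n \<times> 'm)" where
  "blockdiag A = (\<chi> i j. if fst i = fst j then A $ snd i $ snd j else 0)"

definition blockvec :: "'n::finite \<Rightarrow> real^'m \<Rightarrow> real^('n \<times> 'm)" where
  "blockvec a v = (\<chi> i. if fst i = a then v $ snd i else 0)"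

end

theory Submission
  imports Defs
begin

(*
  Both statements follow by exhibiting explicit solutions of the coupled variational equation
  Y' = (- delta C + diag J) Y, C the coupling matrix, and comparing them with Psi through a
  Gronwall-type energy estimate.

  Synchronous mode: t |-> (phi'(t), ..., phi'(t)) is a solution, since phi' solves the
  variational equation of one patch and C annihilates synchronous vectors; as phi' is
  P-periodic, Psi(P, delta) fixes its initial value.

  Antiphase modes: w = d/de Phi(., 0) satisfies w' = J w - E phi' (differentiate
  (I + e E) d/dt Phi = F(Phi) in e and use the symmetry of mixed partials) and
  w(P) = w(0) - P'(0) phi'(0) (differentiate Phi(P(e), e) = Phi(0, e) in e). Hence
  Z(t) = (1/n) (xi_a - xi_b)(t) + delta (eta_a - eta_b)(t) solves the coupled equation up to a
  forcing of size delta^2, so Psi(P, delta) Z(0) = Z(P) + O(delta^2), while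
  Z(P) = (1 - delta n P'(0)) Z(0) + O(delta^2).
*)

section \<open>Second derivatives and mixed partials\<close>

lemma has_vector_derivative_chain:
  fixes f :: "'a::real_normed_vector \<Rightarrow> 'b::real_normed_vector"
  assumes "(g has_vector_derivative g') (at t)" and "(f has_derivative D) (at (g t))"
  shows "((\<lambda>t. f (g t)) has_vector_derivative D g') (at t)"
  using vector_derivative_diff_chain_within[of g g' t UNIV f D] assms
  by (simp add: o_def has_derivative_at_withinI)

lemma vector_differentiable_bound_unit_interval:
  fixes g :: "real \<Rightarrow> 'b::real_normed_vector"
  assumes g': "\<And>u. u \<in> {0..1} \<Longrightarrow> (g has_vector_derivative g' u) (at u)"
    and bound: "\<And>u. u \<in> {0..1} \<Longrightarrow> norm (g' u - c) \<le> B"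
  shows "norm (g 1 - g 0 - c) \<le> B"
proof -
  have d: "((\<lambda>u. g u - u *\<^sub>R c) has_vector_derivative g' u - c) (at u)" if "u \<in> {0..1}" for u
    using g'[OF that] by (auto intro!: derivative_eq_intros)
  have "continuous_on {0..1} (\<lambda>u. g u - u *\<^sub>R c)"
    using d by (meson continuous_at_imp_continuous_on has_vector_derivative_continuous)
  then have "norm ((g 1 - 1 *\<^sub>R c) - (g 0 - 0 *\<^sub>R c)) \<le> 1 * B - 0 * B"
    using d bound
    by (intro differentiable_bound_general[where f' = "\<lambda>u. g' u - c" and \<phi>' = "\<lambda>_. B"])
       (auto intro!: continuous_intros derivative_eq_intros)
  then show ?thesis by (simp add: algebra_simps)
qed

lemma second_difference_approx:
  fixes f :: "'a::real_normed_vector \<Rightarrow> 'b::real_normed_vector"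
    and f' :: "'a \<Rightarrow> 'a \<Rightarrow>\<^sub>L 'b" and f'' :: "'a \<Rightarrow> 'a \<Rightarrow>\<^sub>L 'a \<Rightarrow>\<^sub>L 'b"
  assumes f': "\<And>y. y \<in> ball x r \<Longrightarrow> (f has_derivative f' y) (at y)"
    and f'': "\<And>y. y \<in> ball x r \<Longrightarrow> (f' has_derivative f'' y) (at y)"
    and f''_near: "\<And>y. y \<in> ball x r \<Longrightarrow> norm (f'' y - f'' x) \<le> \<epsilon>"
    and small: "norm a + norm b < r"
  shows "norm (f (x + a + b) - f (x + a) - f (x + b) + f x - f'' x b a) \<le> \<epsilon> * norm a * norm b"
proof -
  have in_ball: "x + u *\<^sub>R a + v *\<^sub>R b \<in> ball x r" if "u \<in> {0..1}" "v \<in> {0..1}" for u v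
  proof -
    have "norm (u *\<^sub>R a + v *\<^sub>R b) \<le> norm a + norm b"
      using that by (intro norm_triangle_le add_mono) (auto intro: mult_left_le_one_le)
    moreover have "dist x (x + u *\<^sub>R a + v *\<^sub>R b) = norm (u *\<^sub>R a + v *\<^sub>R b)"
      by (simp add: dist_norm add.assoc flip: minus_add_distrib)
    ultimately show ?thesis using small by simp
  qed
  have f'_increment: "norm (f' (x + u *\<^sub>R a + 1 *\<^sub>R b) a - f' (x + u *\<^sub>R a + 0 *\<^sub>R b) a - f'' x b a)
      \<le> \<epsilon> * norm a * norm b" if u: "u \<in> {0..1}" for u
  proof (rule vector_differentiable_bound_unit_interval)
    fix v :: real assume v: "v \<in> {0..1}"
    let ?y = "x + u *\<^sub>R a + v *\<^sub>R b"
    have "((\<lambda>v. x + u *\<^sub>R a + v *\<^sub>R b) has_vector_derivative b) (at v)"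
      by (auto intro!: derivative_eq_intros)
    from has_vector_derivative_chain[OF this f''[OF in_ball[OF u v]]]
    have "((\<lambda>v. f' (x + u *\<^sub>R a + v *\<^sub>R b)) has_vector_derivative f'' ?y b) (at v)" .
    from bounded_linear.has_vector_derivative[OF blinfun.bounded_linear_left this]
    show "((\<lambda>v. f' (x + u *\<^sub>R a + v *\<^sub>R b) a) has_vector_derivative f'' ?y b a) (at v)" .
    have "norm (f'' ?y b a - f'' x b a) = norm ((f'' ?y - f'' x) b a)"
      by (simp add: blinfun.diff_left)
    also have "\<dots> \<le> norm ((f'' ?y - f'' x) b) * norm a"
      by (rule norm_blinfun)
    also have "\<dots> \<le> norm (f'' ?y - f'' x) * norm b * norm a"
      by (intro mult_right_mono norm_blinfun norm_ge_zero)
    also have "\<dots> \<le> \<epsilon> * norm b * norm a"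
      using f''_near[OF in_ball[OF u v]] by (intro mult_right_mono) auto
    finally show "norm (f'' ?y b a - f'' x b a) \<le> \<epsilon> * norm a * norm b"
      by (simp add: mult_ac)
  qed
  have "norm ((f (x + 1 *\<^sub>R a + b) - f (x + 1 *\<^sub>R a)) - (f (x + 0 *\<^sub>R a + b) - f (x + 0 *\<^sub>R a))
      - f'' x b a) \<le> \<epsilon> * norm a * norm b"
  proof (rule vector_differentiable_bound_unit_interval)
    fix u :: real assume u: "u \<in> {0..1}"
    have "x + u *\<^sub>R a + b \<in> ball x r" "x + u *\<^sub>R a \<in> ball x r"
      using in_ball[OF u, of 1] in_ball[OF u, of 0] by simp_all
    moreover have "((\<lambda>u. x + u *\<^sub>R a + b) has_vector_derivative a) (at u)"
      "((\<lambda>u. x + u *\<^sub>R a) has_vector_derivative a) (at u)"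
      by (auto intro!: derivative_eq_intros)
    ultimately have "((\<lambda>u. f (x + u *\<^sub>R a + b)) has_vector_derivative f' (x + u *\<^sub>R a + b) a) (at u)"
      "((\<lambda>u. f (x + u *\<^sub>R a)) has_vector_derivative f' (x + u *\<^sub>R a) a) (at u)"
      using has_vector_derivative_chain f' by blast+
    then show "((\<lambda>u. f (x + u *\<^sub>R a + b) - f (x + u *\<^sub>R a)) has_vector_derivative
        f' (x + u *\<^sub>R a + b) a - f' (x + u *\<^sub>R a) a) (at u)"
      by (rule has_vector_derivative_diff)
    show "norm (f' (x + u *\<^sub>R a + b) a - f' (x + u *\<^sub>R a) a - f'' x b a) \<le> \<epsilon> * norm a * norm b"
      using f'_increment[OF u] by simp
  qed
  then show ?thesis by (simp add: algebra_simps)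
qed

lemma second_derivative_asymmetry_le:
  fixes f :: "'a::real_normed_vector \<Rightarrow> 'b::real_normed_vector"
    and f' :: "'a \<Rightarrow> 'a \<Rightarrow>\<^sub>L 'b" and f'' :: "'a \<Rightarrow> 'a \<Rightarrow>\<^sub>L 'a \<Rightarrow>\<^sub>L 'b"
  assumes f': "\<And>y. y \<in> ball x r \<Longrightarrow> (f has_derivative f' y) (at y)"
    and f'': "\<And>y. y \<in> ball x r \<Longrightarrow> (f' has_derivative f'' y) (at y)"
    and f''_near: "\<And>y. y \<in> ball x r \<Longrightarrow> norm (f'' y - f'' x) \<le> \<epsilon>"
    and small: "norm h + norm k < r"
  shows "norm (f'' x k h - f'' x h k) \<le> 2 * \<epsilon> * norm h * norm k"
proof -
  define \<Delta> where "\<Delta> = f (x + h + k) - f (x + h) - f (x + k) + f x"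
  have "norm (\<Delta> - f'' x k h) \<le> \<epsilon> * norm h * norm k"
    unfolding \<Delta>_def using small
    by (intro second_difference_approx[where f' = f' and f'' = f'' and r = r]) (auto intro: f' f'' f''_near)
  moreover have "norm (\<Delta> - f'' x h k) \<le> \<epsilon> * norm k * norm h"
  proof -
    have "\<Delta> = f (x + k + h) - f (x + k) - f (x + h) + f x"
      by (simp add: \<Delta>_def add_ac)
    then show ?thesis
      using small
      by (simp only:) (intro second_difference_approx[where f' = f' and f'' = f'' and r = r],
          auto intro: f' f'' f''_near)
  qed
  moreover have "f'' x k h - f'' x h k = (\<Delta> - f'' x h k) - (\<Delta> - f'' x k h)"
    by simp
  ultimately have "norm (f'' x k h - f'' x h k) \<le> \<epsilon> * norm k * norm h + \<epsilon> * norm h * norm k"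
    by (metis add_mono norm_triangle_le_diff)
  then show ?thesis by (simp add: algebra_simps)
qed

lemma second_derivative_symmetric:
  fixes f :: "'a::real_normed_vector \<Rightarrow> 'b::real_normed_vector"
    and f' :: "'a \<Rightarrow> 'a \<Rightarrow>\<^sub>L 'b" and f'' :: "'a \<Rightarrow> 'a \<Rightarrow>\<^sub>L 'a \<Rightarrow>\<^sub>L 'b"
  assumes "open S" "x \<in> S"
    and f': "\<And>y. y \<in> S \<Longrightarrow> (f has_derivative f' y) (at y)"
    and f'': "\<And>y. y \<in> S \<Longrightarrow> (f' has_derivative f'' y) (at y)"
    and cont: "continuous (at x) f''"
  shows "f'' x k h = f'' x h k"
proof -
  define M where "M = 2 * norm h * norm k"
  have bound: "norm (f'' x k h - f'' x h k) \<le> \<epsilon> * M" if "\<epsilon> > 0" for \<epsilon>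
  proof -
    obtain r1 where "r1 > 0" and r1: "\<And>y. dist y x < r1 \<Longrightarrow> dist (f'' y) (f'' x) < \<epsilon>"
      using cont \<open>\<epsilon> > 0\<close> unfolding continuous_at_eps_delta by blast
    obtain r2 where "r2 > 0" and "ball x r2 \<subseteq> S"
      using \<open>open S\<close> \<open>x \<in> S\<close> openE by blast
    define r where "r = min r1 r2"
    have "r > 0" and "ball x r \<subseteq> S"
      using \<open>r1 > 0\<close> \<open>r2 > 0\<close> \<open>ball x r2 \<subseteq> S\<close> by (auto simp: r_def)
    have near: "norm (f'' y - f'' x) \<le> \<epsilon>" if "y \<in> ball x r" for y
      using r1[of y] that by (simp add: r_def dist_norm norm_minus_commute)
    \<comment> \<open>shrink \<open>h\<close> and \<open>k\<close> into the ball; both sides of the estimate scale by \<open>s\<^sup>2\<close>\<close>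
    define s where "s = r / (norm h + norm k + 1)"
    have "s > 0" using \<open>r > 0\<close> by (simp add: s_def add_nonneg_pos)
    have "norm (s *\<^sub>R h) + norm (s *\<^sub>R k) = r * (norm h + norm k) / (norm h + norm k + 1)"
      using \<open>s > 0\<close> \<open>r > 0\<close> by (simp add: s_def add_divide_distrib distrib_left)
    also have "\<dots> < r" using \<open>r > 0\<close> by (simp add: divide_less_eq add_nonneg_pos)
    finally have "norm (f'' x (s *\<^sub>R k) (s *\<^sub>R h) - f'' x (s *\<^sub>R h) (s *\<^sub>R k))
        \<le> 2 * \<epsilon> * norm (s *\<^sub>R h) * norm (s *\<^sub>R k)"
      using \<open>ball x r \<subseteq> S\<close>
      by (intro second_derivative_asymmetry_le[where f' = f' and f'' = f'' and r = r])
         (auto intro: f' f'' near)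
    then have "s\<^sup>2 * norm (f'' x k h - f'' x h k) \<le> s\<^sup>2 * (\<epsilon> * M)"
      using \<open>s > 0\<close> by (simp add: M_def blinfun.scaleR_left blinfun.scaleR_right power2_eq_square
          flip: scaleR_diff_right)
    then show ?thesis using \<open>s > 0\<close> by simp
  qed
  have "norm (f'' x k h - f'' x h k) \<le> 0"
  proof (rule field_le_epsilon)
    fix e :: real assume "e > 0"
    have "M \<ge> 0" by (simp add: M_def)
    have "norm (f'' x k h - f'' x h k) \<le> e / (M + 1) * M"
      using \<open>e > 0\<close> \<open>M \<ge> 0\<close> by (intro bound) (simp add: add_nonneg_pos)
    also have "\<dots> \<le> e"
      using \<open>e > 0\<close> \<open>M \<ge> 0\<close> by (simp add: field_simps)
    finally show "norm (f'' x k h - f'' x h k) \<le> 0 + e" by simp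
  qed
  then show ?thesis by simp
qed

lemma has_vector_derivative_partials:
  fixes f :: "real \<times> real \<Rightarrow> 'b::real_normed_vector"
  assumes "(f has_derivative D) (at (t, e))"
  shows "((\<lambda>s. f (s, e)) has_vector_derivative D (1, 0)) (at t)"
    and "((\<lambda>s. f (t, s)) has_vector_derivative D (0, 1)) (at e)"
proof -
  have "((\<lambda>s. (s, e)) has_vector_derivative (1, 0)) (at t)"
    by (intro has_vector_derivative_Pair has_vector_derivative_id has_vector_derivative_const)
  from has_vector_derivative_chain[OF this assms]
  show "((\<lambda>s. f (s, e)) has_vector_derivative D (1, 0)) (at t)" by simp
  have "((\<lambda>s. (t, s)) has_vector_derivative (0, 1)) (at e)"
    by (intro has_vector_derivative_Pair has_vector_derivative_id has_vector_derivative_const)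
  from has_vector_derivative_chain[OF this assms]
  show "((\<lambda>s. f (t, s)) has_vector_derivative D (0, 1)) (at e)" by simp
qed

lemma vector_derivative_partials:
  fixes g :: "real \<Rightarrow> real \<Rightarrow> 'b::real_normed_vector"
  assumes "((\<lambda>(t, e). g t e) has_derivative D) (at (t, e))"
  shows "vector_derivative (\<lambda>s. g s e) (at t) = D (1, 0)"
    and "vector_derivative (\<lambda>s. g t s) (at e) = D (0, 1)"
  using has_vector_derivative_partials[OF assms] by (simp_all add: vector_derivative_at)

lemma C2_on_mixed_partials:
  fixes g :: "real \<Rightarrow> real \<Rightarrow> 'b::real_normed_vector"
  assumes C2: "C2_on S (\<lambda>(t, e). g t e)" and "(t, e) \<in> S"
  obtains X where "((\<lambda>s. vector_derivative (\<lambda>e'. g s e') (at e)) has_vector_derivative X) (at t)"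
    and "((\<lambda>e'. vector_derivative (\<lambda>s. g s e') (at t)) has_vector_derivative X) (at e)"
proof -
  have "open S" using C2 by (simp add: C2_on_def)
  obtain f' f'' where f'_S: "\<forall>z\<in>S. ((\<lambda>(t, e). g t e) has_derivative blinfun_apply (f' z)) (at z)"
    and f''_S: "\<forall>z\<in>S. (f' has_derivative blinfun_apply (f'' z)) (at z)"
    and "continuous_on S f''"
    using C2 unfolding C2_on_def by (elim conjE exE) blast
  note f' = bspec[OF f'_S] and f'' = bspec[OF f''_S]
  have "continuous (at (t, e)) f''"
    using \<open>continuous_on S f''\<close> \<open>(t, e) \<in> S\<close> continuous_on_eq_continuous_at[OF \<open>open S\<close>]
    by blast
  from second_derivative_symmetric[OF \<open>open S\<close> \<open>(t, e) \<in> S\<close> f' f'' this]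
  have symmetric: "f'' (t, e) (0, 1) (1, 0) = f'' (t, e) (1, 0) (0, 1)" .
  define T where "T = (\<lambda>s. (s, e)) -` S"
  define U where "U = (\<lambda>s. (t, s)) -` S"
  have "open T" "open U"
    unfolding T_def U_def
    by (rule continuous_open_vimage[OF \<open>open S\<close>], intro continuous_intros)+
  have "t \<in> T" "e \<in> U" using \<open>(t, e) \<in> S\<close> by (auto simp: T_def U_def)
  have "((\<lambda>s. f' (s, e) (0, 1)) has_vector_derivative f'' (t, e) (1, 0) (0, 1)) (at t)"
    using bounded_linear.has_vector_derivative[OF blinfun.bounded_linear_left
        has_vector_derivative_partials(1)[OF f''[OF \<open>(t, e) \<in> S\<close>]]]
    by simp
  moreover have "f' (s, e) (0, 1) = vector_derivative (\<lambda>e'. g s e') (at e)" if "s \<in> T" for s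
    using vector_derivative_partials(2)[OF f'] that by (simp add: T_def)
  ultimately have dT: "((\<lambda>s. vector_derivative (\<lambda>e'. g s e') (at e)) has_vector_derivative
      f'' (t, e) (1, 0) (0, 1)) (at t)"
    by (rule has_vector_derivative_transform_within_open[OF _ \<open>open T\<close> \<open>t \<in> T\<close>])
  have "((\<lambda>e'. f' (t, e') (1, 0)) has_vector_derivative f'' (t, e) (0, 1) (1, 0)) (at e)"
    using bounded_linear.has_vector_derivative[OF blinfun.bounded_linear_left
        has_vector_derivative_partials(2)[OF f''[OF \<open>(t, e) \<in> S\<close>]]]
    by simp
  then have "((\<lambda>e'. f' (t, e') (1, 0)) has_vector_derivative f'' (t, e) (1, 0) (0, 1)) (at e)"
    by (simp only: symmetric)
  moreover have "f' (t, e') (1, 0) = vector_derivative (\<lambda>s. g s e') (at t)" if "e' \<in> U" for e'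
    using vector_derivative_partials(1)[OF f'] that by (simp add: U_def)
  ultimately have dU: "((\<lambda>e'. vector_derivative (\<lambda>s. g s e') (at t)) has_vector_derivative
      f'' (t, e) (1, 0) (0, 1)) (at e)"
    by (rule has_vector_derivative_transform_within_open[OF _ \<open>open U\<close> \<open>e \<in> U\<close>])
  show ?thesis by (rule that[OF dT dU])
qed

section \<open>Linear differential equations\<close>

lemma has_real_derivative_inner_self:
  fixes D :: "real \<Rightarrow> 'v::real_inner"
  assumes "(D has_vector_derivative V) (at t)"
  shows "((\<lambda>t. D t \<bullet> D t) has_real_derivative 2 * (D t \<bullet> V)) (at t)"
proof -
  have "((\<lambda>t. D t \<bullet> D t) has_derivative (\<lambda>h. D t \<bullet> (h *\<^sub>R V) + (h *\<^sub>R V) \<bullet> D t)) (at t)"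
    using has_derivative_inner[OF assms[unfolded has_vector_derivative_def]
        assms[unfolded has_vector_derivative_def]] .
  then show ?thesis
    unfolding has_field_derivative_def
    by (rule has_derivative_eq_rhs) (simp add: fun_eq_iff inner_commute algebra_simps)
qed

lemma energy_estimate:
  fixes D :: "real \<Rightarrow> 'v::real_inner"
  assumes "T \<ge> 0" "L \<ge> 0"
    and D': "\<And>t. (D has_vector_derivative D' t) (at t)"
    and growth: "\<And>t. t \<in> {0..T} \<Longrightarrow> D t \<bullet> D' t \<le> L * (norm (D t))\<^sup>2 + K * norm (D t)"
    and "D 0 = 0"
  shows "(norm (D T))\<^sup>2 \<le> K\<^sup>2 * T * exp ((2 * L + 1) * T)"
proof -
  define c where "c = 2 * L + 1"
  define g where "g t = exp (- c * t) * (D t \<bullet> D t) - K\<^sup>2 * t" for t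
  have g': "(g has_real_derivative
      (- c * exp (- c * t) * (D t \<bullet> D t) + exp (- c * t) * (2 * (D t \<bullet> D' t)) - K\<^sup>2)) (at t)" for t
    unfolding g_def by (rule derivative_eq_intros has_real_derivative_inner_self[OF D'] refl | simp)+
  have "g T \<le> g 0"
  proof (rule DERIV_nonpos_imp_decreasing_open[OF \<open>T \<ge> 0\<close>])
    fix t assume t: "0 < t" "t < T"
    \<comment> \<open>the forcing is absorbed by \<open>2 K |D| \<le> |D|\<^sup>2 + K\<^sup>2\<close>; this costs the \<open>+ 1\<close> in the rate\<close>
    have "2 * (D t \<bullet> D' t) \<le> 2 * L * (norm (D t))\<^sup>2 + 2 * K * norm (D t)"
      using growth[of t] t by auto
    also have "2 * K * norm (D t) \<le> (norm (D t))\<^sup>2 + K\<^sup>2"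
      using sum_squares_bound[of K "norm (D t)"] by (simp add: power2_eq_square mult_ac)
    finally have "2 * (D t \<bullet> D' t) \<le> c * (D t \<bullet> D t) + K\<^sup>2"
      by (simp add: c_def power2_norm_eq_inner algebra_simps)
    then have "exp (- c * t) * (2 * (D t \<bullet> D' t)) \<le> exp (- c * t) * (c * (D t \<bullet> D t) + K\<^sup>2)"
      by (simp add: mult_left_mono)
    then have "- c * exp (- c * t) * (D t \<bullet> D t) + exp (- c * t) * (2 * (D t \<bullet> D' t)) - K\<^sup>2
        \<le> exp (- c * t) * K\<^sup>2 - K\<^sup>2"
      by (simp add: algebra_simps)
    also have "\<dots> \<le> 0"
      using t \<open>L \<ge> 0\<close> by (simp add: c_def mult_nonpos_nonneg mult_left_le_one_le)
    finally have "- c * exp (- c * t) * (D t \<bullet> D t) + exp (- c * t) * (2 * (D t \<bullet> D' t)) - K\<^sup>2 \<le> 0" .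
    then show "\<exists>y. (g has_real_derivative y) (at t) \<and> y \<le> 0" using g' by blast
  qed (use g' in \<open>meson DERIV_isCont continuous_at_imp_continuous_on\<close>)
  then have "exp (- c * T) * (D T \<bullet> D T) \<le> K\<^sup>2 * T"
    by (simp add: g_def \<open>D 0 = 0\<close>)
  then have "D T \<bullet> D T \<le> K\<^sup>2 * T * exp (c * T)"
    by (simp add: exp_minus field_simps)
  then show ?thesis
    by (simp add: c_def power2_norm_eq_inner)
qed

lemma bounded_linear_matrix_vector_mult_left:
  "bounded_linear (\<lambda>M::real^'n^'m. M *v x)"
proof -
  have "linear (\<lambda>M::real^'n^'m. M *v x)"
    by (rule linearI) (simp_all add: matrix_vector_mult_add_rdistrib scaleR_matrix_vector_assoc)
  then show ?thesis by (simp add: linear_conv_bounded_linear)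
qed

lemma principal_fundamental_forced_deviation:
  fixes \<Psi> A :: "real \<Rightarrow> real^'k^'k" and Z H :: "real \<Rightarrow> real^'k"
  assumes \<Psi>: "principal_fundamental A \<Psi>"
    and Z': "\<And>t. (Z has_vector_derivative A t *v Z t + H t) (at t)"
    and "T \<ge> 0" "L \<ge> 0" "K \<ge> 0"
    and A_bound: "\<And>t x. t \<in> {0..T} \<Longrightarrow> norm (A t *v x) \<le> L * norm x"
    and H_bound: "\<And>t. t \<in> {0..T} \<Longrightarrow> norm (H t) \<le> K"
  shows "norm (Z T - \<Psi> T *v Z 0) \<le> K * sqrt (T * exp ((2 * L + 1) * T))"
proof -
  define D where "D t = Z t - \<Psi> t *v Z 0" for t
  have D': "(D has_vector_derivative A t *v D t + H t) (at t)" for t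
  proof -
    have "((\<lambda>t. \<Psi> t *v Z 0) has_vector_derivative (A t ** \<Psi> t) *v Z 0) (at t)"
      using \<Psi> unfolding principal_fundamental_def
      by (blast intro: bounded_linear.has_vector_derivative[OF bounded_linear_matrix_vector_mult_left])
    from has_vector_derivative_diff[OF Z' this] show ?thesis
      unfolding D_def by (simp add: matrix_vector_mul_assoc matrix_vector_mult_diff_distrib algebra_simps)
  qed
  have "(norm (D T))\<^sup>2 \<le> K\<^sup>2 * T * exp ((2 * L + 1) * T)"
  proof (rule energy_estimate[OF \<open>T \<ge> 0\<close> \<open>L \<ge> 0\<close> D'])
    fix t assume t: "t \<in> {0..T}"
    have "D t \<bullet> (A t *v D t + H t) \<le> norm (D t) * norm (A t *v D t) + norm (D t) * norm (H t)"
      by (simp add: inner_add_right add_mono norm_cauchy_schwarz)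
    also have "\<dots> \<le> norm (D t) * (L * norm (D t)) + norm (D t) * K"
      by (intro add_mono mult_left_mono A_bound H_bound t norm_ge_zero)
    finally show "D t \<bullet> (A t *v D t + H t) \<le> L * (norm (D t))\<^sup>2 + K * norm (D t)"
      by (simp add: power2_eq_square algebra_simps)
  qed (use \<Psi> in \<open>simp add: D_def principal_fundamental_def\<close>)
  then have "norm (D T) \<le> sqrt (K\<^sup>2 * T * exp ((2 * L + 1) * T))"
    by (simp add: real_le_rsqrt)
  also have "\<dots> = K * sqrt (T * exp ((2 * L + 1) * T))"
    using \<open>K \<ge> 0\<close> by (simp add: real_sqrt_mult mult.assoc)
  finally show ?thesis by (simp add: D_def)
qed

corollary principal_fundamental_solution:
  fixes \<Psi> A :: "real \<Rightarrow> real^'k^'k" and Z :: "real \<Rightarrow> real^'k"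
  assumes "principal_fundamental A \<Psi>"
    and "\<And>t. (Z has_vector_derivative A t *v Z t) (at t)"
    and "T \<ge> 0" "L \<ge> 0"
    and "\<And>t x. t \<in> {0..T} \<Longrightarrow> norm (A t *v x) \<le> L * norm x"
  shows "\<Psi> T *v Z 0 = Z T"
proof -
  have "norm (Z T - \<Psi> T *v Z 0) \<le> 0 * sqrt (T * exp ((2 * L + 1) * T))"
    by (rule principal_fundamental_forced_deviation[where H = "\<lambda>_. 0"]) (use assms in auto)
  then show ?thesis by simp
qed

lemma compact_imp_uniform_matrix_bound:
  fixes M :: "'a::topological_space \<Rightarrow> real^'n^'m"
  assumes "compact K" and "\<And>i j. continuous_on K (\<lambda>z. M z $ i $ j)"
  obtains L where "L \<ge> 0" and "\<And>z x. z \<in> K \<Longrightarrow> norm (M z *v x) \<le> L * norm x"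
proof -
  have "continuous_on K (\<lambda>z. \<Sum>i\<in>UNIV. \<Sum>j\<in>UNIV. \<bar>M z $ i $ j\<bar>)"
    using assms(2) by (intro continuous_on_sum continuous_on_rabs)
  then obtain L where "L \<ge> 0"
    and L: "\<And>z. z \<in> K \<Longrightarrow> norm (\<Sum>i\<in>UNIV. \<Sum>j\<in>UNIV. \<bar>M z $ i $ j\<bar>) \<le> L"
    using continuous_on_compact_bound[OF \<open>compact K\<close>] by blast
  have bound: "norm (M z *v x) \<le> L * norm x" if "z \<in> K" for z x
  proof -
    have "norm (M z *v x) \<le> onorm ((*v) (M z)) * norm x"
      by (rule onorm[OF matrix_vector_mul_bounded_linear])
    also have "\<dots> \<le> L * norm x"
      using onorm_le_matrix_component_sum[of "M z"] L[OF that]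
      by (intro mult_right_mono) auto
    finally show ?thesis .
  qed
  show ?thesis by (rule that[OF \<open>L \<ge> 0\<close> bound])
qed

section \<open>Block vectors and the coupling matrix\<close>

lemma blockvec_nth [simp]: "blockvec a v $ i = (if fst i = a then v $ snd i else 0)"
  by (simp add: blockvec_def)

lemma blockvec_add: "blockvec a (u + v) = blockvec a u + blockvec a v"
  and blockvec_diff: "blockvec a (u - v) = blockvec a u - blockvec a v"
  and blockvec_scaleR: "blockvec a (c *\<^sub>R v) = c *\<^sub>R blockvec a v"
  by (simp_all add: vec_eq_iff)

lemma bounded_linear_blockvec: "bounded_linear (blockvec a)"
proof -
  have "linear (blockvec a)"
    by (rule linearI) (simp_all add: blockvec_add blockvec_scaleR)
  then show ?thesis by (simp add: linear_conv_bounded_linear)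
qed

lemma matrix_vector_mult_blockvec:
  "(A *v blockvec a v) $ i = (\<Sum>j\<in>UNIV. A $ i $ (a, j) * v $ j)"
proof -
  have "(A *v blockvec a v) $ i = (\<Sum>k\<in>UNIV \<times> UNIV. A $ i $ k * blockvec a v $ k)"
    by (simp add: matrix_vector_mult_def)
  also have "\<dots> = (\<Sum>c\<in>UNIV. \<Sum>j\<in>UNIV. A $ i $ (c, j) * blockvec a v $ (c, j))"
    by (simp only: sum.cartesian_product')
  also have "\<dots> = (\<Sum>c\<in>UNIV. if c = a then \<Sum>j\<in>UNIV. A $ i $ (a, j) * v $ j else 0)"
    by (intro sum.cong) auto
  also have "\<dots> = (\<Sum>j\<in>UNIV. A $ i $ (a, j) * v $ j)"
    by simp
  finally show ?thesis .
qed

lemma blockdiag_mult_blockvec: "blockdiag M *v blockvec a v = blockvec a (M *v v)"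
  by (simp only: vec_eq_iff matrix_vector_mult_blockvec)
     (simp add: blockdiag_def matrix_vector_mult_def)

lemma coupling_mult_blockvec:
  "(coupling E *v blockvec (a::'n::finite) v) $ i
     = (if fst i = a then real CARD('n) - 1 else -1) * (E *v v) $ snd i"
  by (simp only: matrix_vector_mult_blockvec)
     (simp add: coupling_def matrix_vector_mult_def sum_distrib_left mult.assoc sum_negf)

lemma coupling_mult_sum_blockvec: "coupling E *v (\<Sum>a\<in>UNIV. blockvec (a::'n::finite) v) = 0"
proof -
  have row_sum: "(\<Sum>a\<in>UNIV. if c = a then real CARD('n) - 1 else -1) = 0" for c :: 'n
  proof -
    have "(\<Sum>a\<in>UNIV. if c = a then real CARD('n) - 1 else -1)
        = (\<Sum>a\<in>UNIV. (if c = a then real CARD('n) else 0) - 1)"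
      by (rule sum.cong) auto
    then show ?thesis by (simp add: sum_subtractf)
  qed
  have "(coupling E *v (\<Sum>a\<in>UNIV. blockvec (a::'n) v)) $ i
      = (\<Sum>a\<in>UNIV. if fst i = a then real CARD('n) - 1 else -1) * (E *v v) $ snd i" for i
    by (simp add: vec.sum sum_component coupling_mult_blockvec sum_distrib_right)
  then show ?thesis by (simp add: vec_eq_iff row_sum)
qed

definition antiphase_vec :: "'n::finite \<Rightarrow> 'n \<Rightarrow> real^'m \<Rightarrow> real^('n \<times> 'm)"
  where "antiphase_vec a b v = blockvec a v - blockvec b v"

lemma antiphase_vec_diff: "antiphase_vec a b (u - v) = antiphase_vec a b u - antiphase_vec a b v"
  and antiphase_vec_scaleR: "antiphase_vec a b (c *\<^sub>R v) = c *\<^sub>R antiphase_vec a b v"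
  by (simp_all add: antiphase_vec_def blockvec_diff blockvec_scaleR algebra_simps)

lemma bounded_linear_antiphase_vec: "bounded_linear (antiphase_vec a b)"
  unfolding antiphase_vec_def by (intro bounded_linear_sub bounded_linear_blockvec)

lemma blockdiag_mult_antiphase_vec: "blockdiag M *v antiphase_vec a b v = antiphase_vec a b (M *v v)"
  by (simp add: antiphase_vec_def matrix_vector_mult_diff_distrib blockdiag_mult_blockvec)

lemma coupling_mult_antiphase_vec:
  assumes "a \<noteq> b"
  shows "coupling E *v antiphase_vec (a::'n::finite) b v = real CARD('n) *\<^sub>R antiphase_vec a b (E *v v)"
  using assms
  by (auto simp: antiphase_vec_def vec_eq_iff matrix_vector_mult_diff_distrib coupling_mult_blockvec
      algebra_simps)

section \<open>A smooth family of periodic orbits\<close>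

lemma min_period_unique:
  assumes "min_period u P" and "min_period u Q"
  shows "P = Q"
proof -
  have "\<not> Q < P" if "min_period u P" "min_period u Q" for P Q
    using that unfolding min_period_def by blast
  then show ?thesis
    using assms by (meson linorder_neqE_linordered_idom)
qed

locale periodic_family =
  fixes E :: "real^'m^'m"
    and F :: "real^'m \<Rightarrow> real^'m"
    and \<phi> :: "real \<Rightarrow> real^'m"
    and P :: real
    and J :: "real \<Rightarrow> real^'m^'m"
    and \<Phi> :: "real \<Rightarrow> real \<Rightarrow> real^'m"
    and Pe :: "real \<Rightarrow> real"
    and \<epsilon>0 :: real
  assumes F_smooth: "C2_on UNIV F"
    and \<phi>_sol: "\<forall>t. (\<phi> has_vector_derivative F (\<phi> t)) (at t)"
    and \<phi>_per: "min_period \<phi> P"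
    and J_deriv: "\<forall>t. (F has_derivative (\<lambda>h. J t *v h)) (at (\<phi> t))"
    and \<epsilon>0_pos: "\<epsilon>0 > 0"
    and \<Phi>_smooth: "C2_on (UNIV \<times> {-\<epsilon>0<..<\<epsilon>0}) (\<lambda>(t, e). \<Phi> t e)"
    and \<Phi>_sol: "\<forall>e\<in>{-\<epsilon>0<..<\<epsilon>0}. \<forall>t V.
        ((\<lambda>s. \<Phi> s e) has_vector_derivative V) (at t) \<longrightarrow> (mat 1 + e *\<^sub>R E) *v V = F (\<Phi> t e)"
    and \<Phi>_per: "\<forall>e\<in>{-\<epsilon>0<..<\<epsilon>0}. min_period (\<lambda>t. \<Phi> t e) (Pe e)"
    and \<Phi>_0: "\<forall>t. \<Phi> t 0 = \<phi> t"
    and Pe_diff: "Pe differentiable (at 0)"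
begin

definition param_deriv :: "real \<Rightarrow> real^'m"
  where "param_deriv t = vector_derivative (\<lambda>e. \<Phi> t e) (at 0)"

lemma zero_in_parameter_interval: "0 \<in> {-\<epsilon>0<..<\<epsilon>0}"
  using \<epsilon>0_pos by simp

lemma \<Phi>_has_derivative:
  assumes "e \<in> {-\<epsilon>0<..<\<epsilon>0}"
  obtains D where "((\<lambda>(t, e). \<Phi> t e) has_derivative D) (at (t, e))"
  using \<Phi>_smooth assms unfolding C2_on_def by blast

lemma \<Phi>_has_time_derivative:
  assumes "e \<in> {-\<epsilon>0<..<\<epsilon>0}"
  shows "((\<lambda>s. \<Phi> s e) has_vector_derivative vector_derivative (\<lambda>s. \<Phi> s e) (at t)) (at t)"
proof -
  obtain D where "((\<lambda>(t, e). \<Phi> t e) has_derivative D) (at (t, e))"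
    using \<Phi>_has_derivative[OF assms] .
  from has_vector_derivative_partials(1)[OF this] show ?thesis
    by (simp add: vector_derivative_at)
qed

lemma param_deriv_has_vector_derivative:
  "((\<lambda>e. \<Phi> t e) has_vector_derivative param_deriv t) (at 0)"
proof -
  obtain D where "((\<lambda>(t, e). \<Phi> t e) has_derivative D) (at (t, 0))"
    using \<Phi>_has_derivative[OF zero_in_parameter_interval] .
  from has_vector_derivative_partials(2)[OF this] show ?thesis
    by (simp add: param_deriv_def vector_derivative_at)
qed

lemma period_pos: "P > 0"
  using \<phi>_per by (simp add: min_period_def)

lemma velocity_eq: "vector_derivative \<phi> (at t) = F (\<phi> t)"
  using \<phi>_sol by (simp add: vector_derivative_at)

lemma velocity_has_vector_derivative:
  "((\<lambda>t. F (\<phi> t)) has_vector_derivative J t *v F (\<phi> t)) (at t)"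
  using has_vector_derivative_chain \<phi>_sol J_deriv by blast

lemma velocity_periodic: "F (\<phi> (t + P)) = F (\<phi> t)"
  using \<phi>_per by (simp add: min_period_def)

lemma period_at_zero: "Pe 0 = P"
proof -
  have "(\<lambda>t. \<Phi> t 0) = \<phi>" using \<Phi>_0 by (simp add: fun_eq_iff)
  then have "min_period \<phi> (Pe 0)" using \<Phi>_per zero_in_parameter_interval by metis
  then show ?thesis using min_period_unique[OF \<phi>_per] by simp
qed

lemma variational_equation:
  "(param_deriv has_vector_derivative J t *v param_deriv t - E *v F (\<phi> t)) (at t)"
proof -
  define V where "V e = vector_derivative (\<lambda>s. \<Phi> s e) (at t)" for e
  obtain X where param_deriv': "(param_deriv has_vector_derivative X) (at t)"
    and V': "(V has_vector_derivative X) (at 0)"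
    using C2_on_mixed_partials[OF \<Phi>_smooth, of t 0] zero_in_parameter_interval
    unfolding param_deriv_def[abs_def] V_def by auto
  have "V 0 = F (\<phi> t)"
    using \<phi>_sol \<Phi>_0 by (simp add: V_def vector_derivative_at)
  \<comment> \<open>differentiate the perturbed equation \<open>(I + e E) V e = F (\<Phi> t e)\<close> at \<open>e = 0\<close>\<close>
  have "((\<lambda>e. V e + e *\<^sub>R (E *v V e)) has_vector_derivative X + E *v F (\<phi> t)) (at 0)"
    using V' \<open>V 0 = F (\<phi> t)\<close>
    by (auto intro!: derivative_eq_intros
        bounded_linear.has_vector_derivative[OF matrix_vector_mul_bounded_linear])
  moreover have "V e + e *\<^sub>R (E *v V e) = F (\<Phi> t e)" if "e \<in> {-\<epsilon>0<..<\<epsilon>0}" for e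
    using \<Phi>_sol that \<Phi>_has_time_derivative[OF that]
    by (simp add: V_def matrix_vector_mult_add_rdistrib scaleR_matrix_vector_assoc)
  ultimately have "((\<lambda>e. F (\<Phi> t e)) has_vector_derivative X + E *v F (\<phi> t)) (at 0)"
    by (rule has_vector_derivative_transform_within_open[OF _ open_greaterThanLessThan
          zero_in_parameter_interval])
  moreover have "(F has_derivative (\<lambda>h. J t *v h)) (at (\<Phi> t 0))"
    using J_deriv \<Phi>_0 by simp
  from has_vector_derivative_chain[OF param_deriv_has_vector_derivative this]
  have "((\<lambda>e. F (\<Phi> t e)) has_vector_derivative J t *v param_deriv t) (at 0)" .
  ultimately have "X + E *v F (\<phi> t) = J t *v param_deriv t"
    by (rule vector_derivative_unique_at)
  then have "X = J t *v param_deriv t - E *v F (\<phi> t)"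
    by (simp add: eq_diff_eq)
  with param_deriv' show ?thesis by simp
qed

lemma period_curve_has_vector_derivative:
  "((\<lambda>e. \<Phi> (Pe e) e) has_vector_derivative deriv Pe 0 *\<^sub>R F (\<phi> P) + param_deriv P) (at 0)"
proof -
  define d where "d = deriv Pe 0"
  obtain D where D: "((\<lambda>(t, e). \<Phi> t e) has_derivative D) (at (P, 0))"
    using \<Phi>_has_derivative[OF zero_in_parameter_interval] .
  have "D (1, 0) = F (\<phi> P)"
    using vector_derivative_partials(1)[OF D] \<Phi>_0 velocity_eq by simp
  moreover have "D (0, 1) = param_deriv P"
    using vector_derivative_partials(2)[OF D] by (simp add: param_deriv_def)
  moreover have "D (d, 1) = d *\<^sub>R D (1, 0) + D (0, 1)"
    using linear_add[OF has_derivative_linear[OF D], of "(d, 0)" "(0, 1)"]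
      linear_scale[OF has_derivative_linear[OF D], of d "(1, 0)"] by simp
  moreover have "((\<lambda>e. (Pe e, e)) has_vector_derivative (d, 1)) (at 0)"
    using Pe_diff unfolding d_def
    by (intro has_vector_derivative_Pair has_vector_derivative_id)
       (simp add: DERIV_deriv_iff_real_differentiable flip: has_real_derivative_iff_has_vector_derivative)
  moreover have "((\<lambda>(t, e). \<Phi> t e) has_derivative D) (at (Pe 0, 0))"
    using D period_at_zero by simp
  ultimately show ?thesis
    using has_vector_derivative_chain by (fastforce simp: d_def)
qed

lemma param_deriv_period_shift:
  "param_deriv P = param_deriv 0 - deriv Pe 0 *\<^sub>R F (\<phi> 0)"
proof -
  have "\<Phi> (Pe e) e = \<Phi> 0 e" if "e \<in> {-\<epsilon>0<..<\<epsilon>0}" for e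
  proof -
    have "\<forall>t. \<Phi> (t + Pe e) e = \<Phi> t e"
      using \<Phi>_per that by (simp add: min_period_def)
    from this[rule_format, of 0] show ?thesis by simp
  qed
  with period_curve_has_vector_derivative
  have "((\<lambda>e. \<Phi> 0 e) has_vector_derivative deriv Pe 0 *\<^sub>R F (\<phi> P) + param_deriv P) (at 0)"
    by (rule has_vector_derivative_transform_within_open[OF _ open_greaterThanLessThan
          zero_in_parameter_interval])
  with param_deriv_has_vector_derivative
  have "param_deriv 0 = deriv Pe 0 *\<^sub>R F (\<phi> P) + param_deriv P"
    by (rule vector_derivative_unique_at)
  moreover have "F (\<phi> P) = F (\<phi> 0)"
    using velocity_periodic[of 0] by simp
  ultimately show ?thesis
    by (simp add: algebra_simps)
qed

lemma jacobian_entry_continuous: "continuous_on UNIV (\<lambda>t. J t $ i $ j)"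
proof -
  obtain F' :: "(real^'m) \<Rightarrow> ((real^'m) \<Rightarrow>\<^sub>L (real^'m))" and F''
    where F': "\<forall>x. (F has_derivative blinfun_apply (F' x)) (at x)"
      and F'': "\<forall>x. (F' has_derivative blinfun_apply (F'' x)) (at x)"
    using F_smooth unfolding C2_on_def by (elim conjE exE) auto
  have "J t *v h = F' (\<phi> t) h" for t h
    using has_derivative_unique[OF J_deriv[rule_format, of t] F'[rule_format, of "\<phi> t"]] by metis
  then have J_entry: "J t $ i $ j = F' (\<phi> t) (axis j 1) $ i" for t
    by (metis matrix_vector_mult_basis column_def vec_lambda_beta)
  have "continuous_on UNIV F'"
    using F'' by (metis continuous_at_imp_continuous_on has_derivative_continuous)
  moreover have "continuous_on UNIV \<phi>"
    using \<phi>_sol by (metis continuous_at_imp_continuous_on has_vector_derivative_continuous)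
  ultimately have "continuous_on UNIV (\<lambda>t. F' (\<phi> t) (axis j 1) $ i)"
    by (intro continuous_intros) (auto intro: continuous_on_compose2)
  then show ?thesis by (simp add: J_entry)
qed

definition antiphase_ansatz :: "'n::finite \<Rightarrow> 'n \<Rightarrow> real \<Rightarrow> real \<Rightarrow> real^('n \<times> 'm)"
  where "antiphase_ansatz a b \<delta> t
    = (1 / real CARD('n)) *\<^sub>R antiphase_vec a b (F (\<phi> t)) + \<delta> *\<^sub>R antiphase_vec a b (param_deriv t)"

lemma antiphase_ansatz_has_vector_derivative:
  fixes a b :: "'n::finite"
  assumes "a \<noteq> b"
  shows "(antiphase_ansatz a b \<delta> has_vector_derivative
      (- \<delta> *\<^sub>R coupling E + blockdiag (J t)) *v antiphase_ansatz a b \<delta> t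
      + \<delta>\<^sup>2 *\<^sub>R (coupling E *v antiphase_vec a b (param_deriv t))) (at t)"
proof -
  define n where "n = real CARD('n)"
  have "n > 0" by (simp add: n_def)
  let ?U = "antiphase_vec a b (F (\<phi> t))" and ?W = "antiphase_vec a b (param_deriv t)"
  let ?B = "blockdiag (J t) :: real^('n \<times> 'm)^('n \<times> 'm)" and ?C = "coupling E :: real^('n \<times> 'm)^('n \<times> 'm)"
  have derivative: "(antiphase_ansatz a b \<delta> has_vector_derivative (1 / n) *\<^sub>R antiphase_vec a b (J t *v F (\<phi> t))
      + \<delta> *\<^sub>R antiphase_vec a b (J t *v param_deriv t - E *v F (\<phi> t))) (at t)"
    unfolding antiphase_ansatz_def[abs_def] n_def
    by (intro has_vector_derivative_add velocity_has_vector_derivative variational_equation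
        bounded_linear.has_vector_derivative[OF bounded_linear_scaleR_right]
        bounded_linear.has_vector_derivative[OF bounded_linear_antiphase_vec])
  have CU: "?C *v ?U = n *\<^sub>R antiphase_vec a b (E *v F (\<phi> t))"
    using coupling_mult_antiphase_vec[OF assms] by (simp add: n_def)
  have "(- \<delta> *\<^sub>R ?C + ?B) *v antiphase_ansatz a b \<delta> t
      = - \<delta> *\<^sub>R ((1 / n) *\<^sub>R (?C *v ?U) + \<delta> *\<^sub>R (?C *v ?W)) + ((1 / n) *\<^sub>R (?B *v ?U) + \<delta> *\<^sub>R (?B *v ?W))"
    by (simp only: antiphase_ansatz_def n_def matrix_vector_mult_add_rdistrib matrix_vector_right_distrib
        scaleR_matrix_vector_assoc[symmetric] matrix_vector_mult_scaleR)
       (simp add: algebra_simps)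
  then have "(1 / n) *\<^sub>R antiphase_vec a b (J t *v F (\<phi> t))
      + \<delta> *\<^sub>R antiphase_vec a b (J t *v param_deriv t - E *v F (\<phi> t))
      = (- \<delta> *\<^sub>R ?C + ?B) *v antiphase_ansatz a b \<delta> t + \<delta>\<^sup>2 *\<^sub>R (?C *v ?W)"
    using \<open>n > 0\<close>
    by (simp add: CU blockdiag_mult_antiphase_vec antiphase_vec_diff power2_eq_square algebra_simps)
  with derivative show ?thesis by simp
qed

lemma antiphase_ansatz_period:
  fixes a b :: "'n::finite"
  shows "antiphase_ansatz a b \<delta> P = (1 - \<delta> * real CARD('n) * deriv Pe 0) *\<^sub>R antiphase_ansatz a b \<delta> 0
    + (\<delta>\<^sup>2 * real CARD('n) * deriv Pe 0) *\<^sub>R antiphase_vec a b (param_deriv 0)"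
proof -
  have "F (\<phi> P) = F (\<phi> 0)"
    using velocity_periodic[of 0] by simp
  moreover have "real CARD('n) > 0" by simp
  ultimately show ?thesis
    by (simp add: antiphase_ansatz_def param_deriv_period_shift antiphase_vec_diff antiphase_vec_scaleR
        power2_eq_square algebra_simps)
qed


lemma antiphase_forcing_bound:
  fixes a b :: "'n::finite"
  obtains K where "K \<ge> 0"
    and "\<And>t. t \<in> {0..P} \<Longrightarrow> norm (coupling E *v antiphase_vec a b (param_deriv t)) \<le> K"
proof -
  have "continuous_on UNIV param_deriv"
    using variational_equation by (meson continuous_at_imp_continuous_on has_vector_derivative_continuous)
  then have "continuous_on {0..P} (\<lambda>t. coupling E *v antiphase_vec a b (param_deriv t))"
    by (intro bounded_linear.continuous_on[OF matrix_vector_mul_bounded_linear]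
        bounded_linear.continuous_on[OF bounded_linear_antiphase_vec])
       (rule continuous_on_subset, auto)
  then show ?thesis
    using continuous_on_compact_bound[OF compact_Icc] that by blast
qed

end

section \<open>Coupled patches\<close>

locale coupled_patches = periodic_family E F \<phi> P J \<Phi> Pe \<epsilon>0
  for E :: "real^'m^'m" and F \<phi> P J \<Phi> Pe \<epsilon>0 +
  fixes \<Psi> :: "real \<Rightarrow> real \<Rightarrow> real^('n::finite \<times> 'm)^('n \<times> 'm)"
  assumes \<Psi>_fund: "\<forall>\<delta>. principal_fundamental (\<lambda>t. - \<delta> *\<^sub>R coupling E + blockdiag (J t)) (\<Psi> \<delta>)"
begin

lemma coupled_jacobian_bound:
  obtains L where "L \<ge> 0"
    and "\<And>\<delta> t x. \<delta> \<in> {-\<Delta>..\<Delta>} \<Longrightarrow> t \<in> {0..P} \<Longrightarrow>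
      norm ((- \<delta> *\<^sub>R coupling E + blockdiag (J t)) *v x) \<le> L * norm (x :: real^('n \<times> 'm))"
proof -
  let ?M = "\<lambda>z. - fst z *\<^sub>R coupling E + blockdiag (J (snd z)) :: real^('n \<times> 'm)^('n \<times> 'm)"
  have entries: "continuous_on ({-\<Delta>..\<Delta>} \<times> {0..P}) (\<lambda>z. ?M z $ i $ j)" for i j
  proof -
    have entry: "(\<lambda>z. ?M z $ i $ j) = (\<lambda>z. - fst z * coupling E $ i $ j
        + (if fst i = fst j then J (snd z) $ snd i $ snd j else 0))"
      by (simp add: blockdiag_def fun_eq_iff)
    have J_snd: "continuous_on S (\<lambda>z::real \<times> real. J (snd z) $ snd i $ snd j)" for S
      by (rule continuous_on_compose2[OF jacobian_entry_continuous
            continuous_on_snd[OF continuous_on_id] subset_UNIV])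
    show ?thesis
      unfolding entry
      by (cases "fst i = fst j") (auto intro!: continuous_on_add continuous_on_diff continuous_on_mult
          continuous_on_minus continuous_on_fst continuous_on_id continuous_on_const J_snd)
  qed
  obtain L where "L \<ge> 0"
    and L: "\<And>z x. z \<in> {-\<Delta>..\<Delta>} \<times> {0..P} \<Longrightarrow> norm (?M z *v x) \<le> L * norm x"
    using compact_imp_uniform_matrix_bound[OF compact_Times[OF compact_Icc compact_Icc] entries] by blast
  show ?thesis
  proof (rule that[OF \<open>L \<ge> 0\<close>])
    fix \<delta> t and x :: "real^('n \<times> 'm)"
    assume "\<delta> \<in> {-\<Delta>..\<Delta>}" "t \<in> {0..P}"
    then show "norm ((- \<delta> *\<^sub>R coupling E + blockdiag (J t)) *v x) \<le> L * norm x"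
      using L[of "(\<delta>, t)" x] by simp
  qed
qed

lemma synchronous_mode_periodic:
  "\<Psi> \<delta> P *v (\<Sum>a\<in>UNIV. blockvec a (F (\<phi> 0))) = (\<Sum>a\<in>UNIV. blockvec a (F (\<phi> 0)))"
proof -
  define Z where "Z t = (\<Sum>a\<in>UNIV. blockvec (a::'n) (F (\<phi> t)))" for t
  have "(Z has_vector_derivative (- \<delta> *\<^sub>R coupling E + blockdiag (J t)) *v Z t) (at t)" for t
  proof -
    have "(Z has_vector_derivative (\<Sum>a\<in>UNIV. blockvec a (J t *v F (\<phi> t)))) (at t)"
      unfolding Z_def
      by (intro has_vector_derivative_sum bounded_linear.has_vector_derivative[OF bounded_linear_blockvec]
          velocity_has_vector_derivative)
    moreover have "(- \<delta> *\<^sub>R coupling E + blockdiag (J t)) *v Z t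
        = - \<delta> *\<^sub>R (coupling E *v Z t) + blockdiag (J t) *v Z t"
      by (simp only: matrix_vector_mult_add_rdistrib scaleR_matrix_vector_assoc[symmetric])
    moreover have "coupling E *v Z t = 0"
      unfolding Z_def by (rule coupling_mult_sum_blockvec)
    moreover have "blockdiag (J t) *v Z t = (\<Sum>a\<in>UNIV. blockvec a (J t *v F (\<phi> t)))"
      unfolding Z_def by (simp add: vec.sum blockdiag_mult_blockvec)
    ultimately show ?thesis by simp
  qed
  moreover obtain L where "L \<ge> 0" and L: "\<And>\<delta>' t x. \<delta>' \<in> {-\<bar>\<delta>\<bar>..\<bar>\<delta>\<bar>} \<Longrightarrow> t \<in> {0..P} \<Longrightarrow>
      norm ((- \<delta>' *\<^sub>R coupling E + blockdiag (J t)) *v x) \<le> L * norm (x :: real^('n \<times> 'm))"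
    using coupled_jacobian_bound[where \<Delta> = "\<bar>\<delta>\<bar>"] by blast
  moreover have "\<delta> \<in> {-\<bar>\<delta>\<bar>..\<bar>\<delta>\<bar>}" by (auto simp: abs_if)
  ultimately have "\<Psi> \<delta> P *v Z 0 = Z P"
    using period_pos L
    by (intro principal_fundamental_solution[OF \<Psi>_fund[rule_format]]) auto
  then show ?thesis
    using velocity_periodic[of 0] by (simp add: Z_def)
qed

lemma antiphase_mode_expansion:
  fixes a b :: 'n
  assumes "a \<noteq> b"
  obtains C where "\<And>\<delta>. \<bar>\<delta>\<bar> \<le> 1 \<Longrightarrow>
    norm (\<Psi> \<delta> P *v antiphase_ansatz a b \<delta> 0
      - (1 - \<delta> * real CARD('n) * deriv Pe 0) *\<^sub>R antiphase_ansatz a b \<delta> 0) \<le> C * \<delta>\<^sup>2"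
proof -
  obtain K where "K \<ge> 0"
    and K: "\<And>t. t \<in> {0..P} \<Longrightarrow> norm (coupling E *v antiphase_vec a b (param_deriv t)) \<le> K"
    using antiphase_forcing_bound by blast
  obtain L where "L \<ge> 0" and L: "\<And>\<delta> t x. \<delta> \<in> {-1..1} \<Longrightarrow> t \<in> {0..P} \<Longrightarrow>
      norm ((- \<delta> *\<^sub>R coupling E + blockdiag (J t)) *v x) \<le> L * norm (x :: real^('n \<times> 'm))"
    using coupled_jacobian_bound[where \<Delta> = 1] by blast
  define n where "n = real CARD('n)"
  define d where "d = deriv Pe 0"
  define S where "S = sqrt (P * exp ((2 * L + 1) * P))"
  show ?thesis
  proof (rule that)
    fix \<delta> :: real
    assume "\<bar>\<delta>\<bar> \<le> 1"
    let ?Z = "antiphase_ansatz a b \<delta>"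
    have deviation: "norm (?Z P - \<Psi> \<delta> P *v ?Z 0) \<le> (\<delta>\<^sup>2 * K) * S"
      unfolding S_def
    proof (rule principal_fundamental_forced_deviation[OF \<Psi>_fund[rule_format]
          antiphase_ansatz_has_vector_derivative[OF \<open>a \<noteq> b\<close>]])
      show "norm ((- \<delta> *\<^sub>R coupling E + blockdiag (J t)) *v x) \<le> L * norm x"
        if "t \<in> {0..P}" for t and x :: "real^('n \<times> 'm)"
      proof (rule L)
        show "\<delta> \<in> {-1..1}" using \<open>\<bar>\<delta>\<bar> \<le> 1\<close> by (simp add: abs_le_iff)
      qed (use that in simp)
      show "norm (\<delta>\<^sup>2 *\<^sub>R (coupling E *v antiphase_vec a b (param_deriv t))) \<le> \<delta>\<^sup>2 * K"
        if "t \<in> {0..P}" for t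
        using K[OF that] by (simp add: mult_left_mono)
    qed (use period_pos \<open>L \<ge> 0\<close> \<open>K \<ge> 0\<close> in auto)
    have "\<Psi> \<delta> P *v ?Z 0 - (1 - \<delta> * n * d) *\<^sub>R ?Z 0
        = (\<delta>\<^sup>2 * n * d) *\<^sub>R antiphase_vec a b (param_deriv 0) - (?Z P - \<Psi> \<delta> P *v ?Z 0)"
      by (simp add: antiphase_ansatz_period n_def d_def)
    then have "norm (\<Psi> \<delta> P *v ?Z 0 - (1 - \<delta> * n * d) *\<^sub>R ?Z 0)
        \<le> norm ((\<delta>\<^sup>2 * n * d) *\<^sub>R antiphase_vec a b (param_deriv 0)) + norm (?Z P - \<Psi> \<delta> P *v ?Z 0)"
      by (simp only: norm_triangle_ineq4)
    also have "\<dots> \<le> (n * \<bar>d\<bar> * norm (antiphase_vec a b (param_deriv 0)) + K * S) * \<delta>\<^sup>2"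
      using deviation by (simp add: n_def abs_mult algebra_simps)
    finally show "norm (\<Psi> \<delta> P *v ?Z 0 - (1 - \<delta> * real CARD('n) * deriv Pe 0) *\<^sub>R ?Z 0)
        \<le> (n * \<bar>d\<bar> * norm (antiphase_vec a b (param_deriv 0)) + K * S) * \<delta>\<^sup>2"
      by (simp add: n_def d_def)
  qed
qed

end

theorem lemma2p1:
  fixes E :: "real^'m^'m"
    and F :: "real^'m \<Rightarrow> real^'m"
    and \<phi> :: "real \<Rightarrow> real^'m"
    and P :: real
    and J :: "real \<Rightarrow> real^'m^'m"
    and X :: "real \<Rightarrow> real^'m^'m"
    and \<Phi> :: "real \<Rightarrow> real \<Rightarrow> real^'m"
    and Pe :: "real \<Rightarrow> real"
    and \<epsilon>0 :: real
    and \<Psi> :: "real \<Rightarrow> real \<Rightarrow> real^('n::finite \<times> 'm)^('n \<times> 'm)"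
  assumes n2: "CARD('n) \<ge> 2"
    and F_smooth: "C2_on UNIV F"
    and \<phi>_sol: "\<forall>t. (\<phi> has_vector_derivative F (\<phi> t)) (at t)"
    and \<phi>_per: "min_period \<phi> P"
    and J_def: "\<forall>t. (F has_derivative (\<lambda>h. J t *v h)) (at (\<phi> t))"
    and X_fund: "principal_fundamental J X"
    and floquet: "floquet_hyperbolic (X P)"
    and \<epsilon>0_pos: "\<epsilon>0 > 0"
    and \<Phi>_smooth: "C2_on (UNIV \<times> {-\<epsilon>0<..<\<epsilon>0}) (\<lambda>(t, e). \<Phi> t e)"
    and \<Phi>_sol: "\<forall>e\<in>{-\<epsilon>0<..<\<epsilon>0}. \<forall>t V.
        ((\<lambda>s. \<Phi> s e) has_vector_derivative V) (at t) \<longrightarrow> (mat 1 + e *\<^sub>R E) *v V = F (\<Phi> t e)"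
    and \<Phi>_per: "\<forall>e\<in>{-\<epsilon>0<..<\<epsilon>0}. min_period (\<lambda>t. \<Phi> t e) (Pe e)"
    and \<Phi>_0: "\<forall>t. \<Phi> t 0 = \<phi> t"
    and Pe_diff: "Pe differentiable (at 0)"
    and \<Psi>_fund: "\<forall>\<delta>. principal_fundamental (\<lambda>t. - \<delta> *\<^sub>R coupling E + blockdiag (J t)) (\<Psi> \<delta>)"
  shows "(\<forall>\<delta>\<ge>0. \<Psi> \<delta> P *v (\<Sum>a\<in>UNIV. blockvec a (vector_derivative \<phi> (at 0)))
              = (\<Sum>a\<in>UNIV. blockvec a (vector_derivative \<phi> (at 0))))
       \<and> (\<forall>a b. a \<noteq> b \<longrightarrow>
           (let \<zeta> = (\<lambda>\<delta>. (1 / real CARD('n)) *\<^sub>R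
                        (blockvec a (vector_derivative \<phi> (at 0)) - blockvec b (vector_derivative \<phi> (at 0)))
                      + \<delta> *\<^sub>R (blockvec a (vector_derivative (\<lambda>e. \<Phi> 0 e) (at 0))
                                 - blockvec b (vector_derivative (\<lambda>e. \<Phi> 0 e) (at 0))))
            in \<exists>C \<delta>0. \<delta>0 > 0 \<and> (\<forall>\<delta>. 0 \<le> \<delta> \<and> \<delta> < \<delta>0 \<longrightarrow>
                 norm (\<Psi> \<delta> P *v \<zeta> \<delta> - (1 - \<delta> * real CARD('n) * deriv Pe 0) *\<^sub>R \<zeta> \<delta>) \<le> C * \<delta>\<^sup>2)))"
proof -
  interpret coupled_patches E F \<phi> P J \<Phi> Pe \<epsilon>0 \<Psi>
    by unfold_locales (fact assms)+
  have \<xi>: "vector_derivative \<phi> (at 0) = F (\<phi> 0)"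
    by (rule velocity_eq)
  have \<eta>: "vector_derivative (\<lambda>e. \<Phi> 0 e) (at 0) = param_deriv 0"
    by (simp add: param_deriv_def)
  show ?thesis
    unfolding \<xi> \<eta> Let_def
    apply (intro conjI allI impI synchronous_mode_periodic)
    apply (erule antiphase_mode_expansion[unfolded antiphase_ansatz_def antiphase_vec_def])
    subgoal for a b C by (intro exI[of _ C] exI[of _ 1]) (auto simp: abs_le_iff)
    done
qed

end
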